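(* Let $\mathbf{B}(t)$ be an $n$-dimensional Brownian motion and fix $a>0$. Then almost surely, for all sufficiently large $j \in \mathbb{N}$, there exists an integer $i$ with $1 \le i \le 2^j - 1$ such that (1) $\left|\mathbf{B}\left(\frac{i+1}{2^j}\right) - \mathbf{B}\left(\frac{i}{2^j}\right)\right| \le \frac{2}{\sqrt{2}^{\,j}}$, and (2) $\max_{\frac{i}{2^j}\le t\le\frac{i+1}{2^j}} \left|\mathbf{B}(t) - \mathbf{B}\left(\frac{i}{2^j}\right)\right| \ge \frac{a}{\sqrt{2}^{\,j}}$.
   Context: An $n$-dimensional Brownian motion is $(B_1(t),\dots,B_n(t))$ with independent one-dimensional Brownian motions $B_k$; $|\cdot|$ is the Euclidean norm. *)

theory Defs
  imports "HOL-Probability.Probability"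
begin

definition bm1 :: "'a measure \<Rightarrow> (real \<Rightarrow> 'a \<Rightarrow> real) \<Rightarrow> bool" where
  "bm1 M B \<longleftrightarrow>
     prob_space M \<and>
     (\<forall>t\<ge>0. B t \<in> borel_measurable M) \<and>
     (AE \<omega> in M. B 0 \<omega> = 0) \<and>
     (AE \<omega> in M. continuous_on {0..} (\<lambda>t. B t \<omega>)) \<and>
     (\<forall>s t. 0 \<le> s \<and> s < t \<longrightarrow>
        distributed M lborel (\<lambda>\<omega>. B t \<omega> - B s \<omega>)
          (\<lambda>x. ennreal (normal_density 0 (sqrt (t - s)) x))) \<and>
     (\<forall>(m::nat) (\<tau>::nat \<Rightarrow> real). 0 \<le> \<tau> 0 \<and> (\<forall>i<m. \<tau> i < \<tau> (Suc i)) \<longrightarrow>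
        prob_space.indep_vars M (\<lambda>_. borel)
          (\<lambda>i \<omega>. B (\<tau> (Suc i)) \<omega> - B (\<tau> i) \<omega>) {..<m})"

text \<open>An n-dimensional Brownian motion, n = CARD('n): the coordinates
B_k are one-dimensional Brownian motions which are independent (as
processes, i.e. as random elements of the path space on [0,\<infinity>)).\<close>
definition brownian_motion :: "'a measure \<Rightarrow> (real \<Rightarrow> 'a \<Rightarrow> real ^ 'n) \<Rightarrow> bool" where
  "brownian_motion M B \<longleftrightarrow>
     prob_space M \<and>
     (\<forall>k. bm1 M (\<lambda>t \<omega>. B t \<omega> $ k)) \<and>
     prob_space.indep_vars M (\<lambda>_. PiM {0::real..} (\<lambda>_. borel))
        (\<lambda>k \<omega>. restrict (\<lambda>t. B t \<omega> $ k) {0..}) UNIV"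

end

theory Submission
  imports Defs
begin

text \<open>Split \<open>[i/2^j, (i+1)/2^j]\<close> into its two halves, of length \<open>\<sigma>\<^sup>2 = 1/2^(j+1)\<close>.
With a probability \<open>q > 0\<close> that depends neither on \<open>i\<close> nor on \<open>j\<close>, every coordinate
of \<open>B\<close> rises by between \<open>c\<sigma>\<close> and \<open>(c + \<epsilon>)\<sigma>\<close> on the first half and falls back by
the same band on the second ("tent"). Then the increment over the whole interval is at
most \<open>n\<epsilon>\<sigma>\<close> in norm, while the path reaches distance \<open>c\<sigma>\<close> at the midpoint; with
\<open>c = a\<surd>2\<close> and \<open>\<epsilon> = 1/n\<close> these are the two required bounds. The tent events for
\<open>i = 1, \<dots>, 2^j - 1\<close> involve disjoint increments and are therefore independent, so all
of them fail with probability at most \<open>(1 - q)^(2^j - 1) \<le> (1 - q)^j\<close>, which is summable;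
Borel--Cantelli and the continuity of the paths (which makes the supremum finite) conclude.\<close>

lemma (in prob_space) prob_INT_compl_indep_events:
  assumes indep: "indep_events F I" and "finite I" "I \<noteq> {}"
  shows "prob (\<Inter>i\<in>I. space M - F i) = (\<Prod>i\<in>I. 1 - prob (F i))"
proof -
  have F: "F i \<in> events" if "i \<in> I" for i
    using indep that by (auto simp: indep_events_def)
  have "indep_sets (\<lambda>i. sigma_sets (space M) {F i}) I"
    using indep unfolding indep_events_def_alt
    by (rule indep_sets_sigma) (simp add: Int_stable_def)
  then have "prob (\<Inter>i\<in>I. space M - F i) = (\<Prod>i\<in>I. prob (space M - F i))"
    by (rule indep_setsD) (use assms in \<open>auto intro: sigma_sets.Compl\<close>)
  also have "\<dots> = (\<Prod>i\<in>I. 1 - prob (F i))"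
    using F by (intro prod.cong refl) (simp add: prob_compl)
  finally show ?thesis .
qed

lemma (in prob_space) AE_eventually_ex_of_indep_events:
  assumes indep: "\<And>j. indep_events (F j) (I j)" and fin: "\<And>j. finite (I j)"
    and card: "\<And>j. j \<le> card (I j)"
    and "q > 0" and prob_F: "\<And>j i. i \<in> I j \<Longrightarrow> q \<le> prob (F j i)"
  shows "AE \<omega> in M. eventually (\<lambda>j. \<exists>i\<in>I j. \<omega> \<in> F j i) sequentially"
proof -
  obtain i1 where "i1 \<in> I 1"
    using card[of 1] by fastforce
  then have q_le_1: "q \<le> 1"
    using prob_F by (meson order.trans prob_le_1)
  define miss where "miss j = space M - (\<Union>i\<in>I j. F j i)" for j
  have F: "F j i \<in> events" if "i \<in> I j" for j i
    using indep that by (auto simp: indep_events_def)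
  then have miss_events: "miss j \<in> events" for j
    unfolding miss_def using fin by (intro sets.Diff sets.finite_UN) auto
  have prob_miss: "prob (miss j) \<le> (1 - q) ^ j" for j
  proof (cases "I j = {}")
    case True
    then show ?thesis using card[of j] by simp
  next
    case False
    have "miss j = (\<Inter>i\<in>I j. space M - F j i)"
      using False by (auto simp: miss_def)
    then have "prob (miss j) = (\<Prod>i\<in>I j. 1 - prob (F j i))"
      using prob_INT_compl_indep_events[OF indep fin False] by simp
    also have "\<dots> \<le> (\<Prod>i\<in>I j. 1 - q)"
      using prob_F by (intro prod_mono) auto
    also have "\<dots> \<le> (1 - q) ^ j"
      using card[of j] \<open>q > 0\<close> q_le_1 by (simp add: power_decreasing)
    finally show ?thesis .
  qed
  have "summable (\<lambda>j. prob (miss j))"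
    using prob_miss \<open>q > 0\<close> q_le_1
    by (intro summable_comparison_test'[OF summable_geometric[of "1 - q"]]) auto
  then have "AE \<omega> in M. eventually (\<lambda>j. \<omega> \<in> space M - miss j) sequentially"
    using miss_events by (intro borel_cantelli_AE1) (auto simp: emeasure_eq_measure)
  then show ?thesis
    by eventually_elim (auto elim: eventually_mono simp: miss_def)
qed

lemma std_normal_distribution_Icc_pos:
  assumes "c < d"
  shows "measure std_normal_distribution {c..d} > 0"
proof -
  interpret N: real_distribution std_normal_distribution
    by (rule real_dist_normal_dist)
  have "{c..d} \<notin> null_sets lborel"
    using assms by (simp add: null_sets_def)
  then have "\<not> (AE x in lborel. x \<in> {c..d} \<longrightarrow> std_normal_density x = 0)"
    using AE_iff_null_sets[of "{c..d}" lborel] normal_density_pos[of 1 0] by (simp add: less_le)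
  then have "{c..d} \<notin> null_sets std_normal_distribution"
    by (simp add: null_sets_density_iff)
  then show ?thesis
    by (simp add: null_sets_def N.emeasure_eq_measure less_le)
qed

lemma bm1_prob_increment_scaled:
  assumes bm: "bm1 M X" and "0 \<le> s" "s < t"
  shows "measure M {\<omega>\<in>space M. X t \<omega> - X s \<omega> \<in> {c * sqrt (t - s) .. d * sqrt (t - s)}}
           = measure std_normal_distribution {c..d}"
proof -
  interpret prob_space M
    using bm by (simp add: bm1_def)
  define \<sigma> where "\<sigma> = sqrt (t - s)"
  have "\<sigma> > 0"
    using \<open>s < t\<close> by (simp add: \<sigma>_def)
  have "distributed M lborel (\<lambda>\<omega>. X t \<omega> - X s \<omega>) (\<lambda>x. ennreal (normal_density 0 \<sigma> x))"
    using bm \<open>0 \<le> s\<close> \<open>s < t\<close> unfolding bm1_def \<sigma>_def by blast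
  then have std: "distributed M lborel (\<lambda>\<omega>. (X t \<omega> - X s \<omega>) / \<sigma>) (\<lambda>x. ennreal (std_normal_density x))"
    using normal_standard_normal_convert[OF \<open>\<sigma> > 0\<close>, of "\<lambda>\<omega>. X t \<omega> - X s \<omega>" 0] by simp
  have "{\<omega>\<in>space M. X t \<omega> - X s \<omega> \<in> {c * \<sigma> .. d * \<sigma>}} = (\<lambda>\<omega>. (X t \<omega> - X s \<omega>) / \<sigma>) -` {c..d} \<inter> space M"
    using \<open>\<sigma> > 0\<close> by (auto simp: field_simps)
  also have "measure M \<dots> = measure (distr M lborel (\<lambda>\<omega>. (X t \<omega> - X s \<omega>) / \<sigma>)) {c..d}"
    using std[THEN distributed_measurable] by (intro measure_distr[symmetric]) auto
  also have "\<dots> = measure std_normal_distribution {c..d}"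
    using std by (simp add: distributed_distr_eq_density)
  finally show ?thesis
    by (simp add: \<sigma>_def)
qed

lemma bm1_prob_increments_prod:
  assumes bm: "bm1 M X" and "\<And>m. 0 \<le> \<tau> m" and "\<And>m. \<tau> m < \<tau> (Suc m)"
    and "finite S" and "\<And>m. m \<in> S \<Longrightarrow> C m \<in> sets borel"
  shows "measure M {\<omega>\<in>space M. \<forall>m\<in>S. X (\<tau> (Suc m)) \<omega> - X (\<tau> m) \<omega> \<in> C m}
       = (\<Prod>m\<in>S. measure M {\<omega>\<in>space M. X (\<tau> (Suc m)) \<omega> - X (\<tau> m) \<omega> \<in> C m})"
proof (cases "S = {}")
  case True
  then show ?thesis
    using bm by (simp add: bm1_def prob_space.prob_space)
next
  case False
  interpret prob_space M
    using bm by (simp add: bm1_def)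
  let ?incr = "\<lambda>m \<omega>. X (\<tau> (Suc m)) \<omega> - X (\<tau> m) \<omega>"
  have "indep_vars (\<lambda>_. borel) ?incr {..<Suc (Max S)}"
    using bm assms(2,3) unfolding bm1_def by blast
  moreover have "S \<subseteq> {..<Suc (Max S)}"
    using \<open>finite S\<close> by (auto simp: less_Suc_eq_le)
  ultimately have "prob (\<Inter>m\<in>S. ?incr m -` C m \<inter> space M) = (\<Prod>m\<in>S. prob (?incr m -` C m \<inter> space M))"
    using False assms(4,5) by (intro indep_varsD) auto
  moreover have "(\<Inter>m\<in>S. ?incr m -` C m \<inter> space M) = {\<omega>\<in>space M. \<forall>m\<in>S. ?incr m \<omega> \<in> C m}"
    using False by auto
  ultimately show ?thesis
    by (simp add: vimage_def Int_def conj_commute)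
qed

definition increment_event ::
    "'a measure \<Rightarrow> (real \<Rightarrow> 'a \<Rightarrow> real ^ 'n) \<Rightarrow> (nat \<Rightarrow> real) \<Rightarrow> (nat \<Rightarrow> real set) \<Rightarrow> nat set \<Rightarrow> 'a set"
  where "increment_event M B \<tau> C S =
    {\<omega>\<in>space M. \<forall>m\<in>S. \<forall>k. B (\<tau> (Suc m)) \<omega> $ k - B (\<tau> m) \<omega> $ k \<in> C m}"

lemma increment_event_in_sets:
  assumes bm: "brownian_motion M B" and "\<And>m. 0 \<le> \<tau> m"
    and "finite S" and "\<And>m. C m \<in> sets borel"
  shows "increment_event M B \<tau> C S \<in> sets M"
proof -
  have [measurable]: "(\<lambda>\<omega>. B (\<tau> m) \<omega> $ k) \<in> borel_measurable M" for m k
    using bm assms(2) by (simp add: brownian_motion_def bm1_def)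
  have [measurable]: "C m \<in> sets borel" for m
    by (rule assms(4))
  show ?thesis
    unfolding increment_event_def using \<open>finite S\<close> by measurable
qed

lemma prob_increment_event:
  assumes bm: "brownian_motion M B" and \<tau>_nonneg: "\<And>m. 0 \<le> \<tau> m" and \<tau>_mono: "\<And>m. \<tau> m < \<tau> (Suc m)"
    and S: "finite S" and C: "\<And>m. C m \<in> sets borel"
  shows "measure M (increment_event M B \<tau> C S)
       = (\<Prod>k\<in>UNIV. \<Prod>m\<in>S. measure M {\<omega>\<in>space M. B (\<tau> (Suc m)) \<omega> $ k - B (\<tau> m) \<omega> $ k \<in> C m})"
proof -
  interpret prob_space M
    using bm by (simp add: brownian_motion_def)
  let ?N = "PiM {0::real..} (\<lambda>_. borel :: real measure)"
  let ?path = "\<lambda>k \<omega>. restrict (\<lambda>t. B t \<omega> $ k) {0..}"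
  define A where "A = {f\<in>space ?N. \<forall>m\<in>S. f (\<tau> (Suc m)) - f (\<tau> m) \<in> C m}"
  have "(\<lambda>f. f (\<tau> m)) \<in> borel_measurable ?N" for m
    using \<tau>_nonneg by (intro measurable_component_singleton) auto
  then have A_sets: "A \<in> sets ?N"
    unfolding A_def using S C by measurable
  have path_A: "?path k -` A \<inter> space M = {\<omega>\<in>space M. \<forall>m\<in>S. B (\<tau> (Suc m)) \<omega> $ k - B (\<tau> m) \<omega> $ k \<in> C m}" for k
    using \<tau>_nonneg by (auto simp: A_def space_PiM)
  have "indep_vars (\<lambda>_. ?N) ?path UNIV"
    using bm unfolding brownian_motion_def by blast
  then have "prob (\<Inter>k\<in>UNIV. ?path k -` A \<inter> space M) = (\<Prod>k\<in>UNIV. prob (?path k -` A \<inter> space M))"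
    using A_sets by (intro indep_varsD) auto
  moreover have "(\<Inter>k\<in>UNIV. ?path k -` A \<inter> space M) = increment_event M B \<tau> C S"
    unfolding path_A increment_event_def by auto
  moreover have "prob (?path k -` A \<inter> space M)
      = (\<Prod>m\<in>S. measure M {\<omega>\<in>space M. B (\<tau> (Suc m)) \<omega> $ k - B (\<tau> m) \<omega> $ k \<in> C m})" for k
    unfolding path_A using bm \<tau>_nonneg \<tau>_mono S C
    by (intro bm1_prob_increments_prod[where X = "\<lambda>t \<omega>. B t \<omega> $ k"]) (auto simp: brownian_motion_def)
  ultimately show ?thesis
    by simp
qed

lemma prob_increment_event_scaled_Icc:
  fixes B :: "real \<Rightarrow> 'a \<Rightarrow> real ^ 'n"
  assumes bm: "brownian_motion M B" and "\<And>m. 0 \<le> \<tau> m" and "\<And>m. \<tau> m < \<tau> (Suc m)"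
    and "finite S"
    and C: "\<And>m. C m = {lo m * sqrt (\<tau> (Suc m) - \<tau> m) .. hi m * sqrt (\<tau> (Suc m) - \<tau> m)}"
  shows "measure M (increment_event M B \<tau> C S)
       = (\<Prod>m\<in>S. measure std_normal_distribution {lo m..hi m}) ^ CARD('n)"
proof -
  have "measure M {\<omega>\<in>space M. B (\<tau> (Suc m)) \<omega> $ k - B (\<tau> m) \<omega> $ k \<in> C m}
      = measure std_normal_distribution {lo m..hi m}" for m k
    unfolding C using bm assms(2,3)
    by (intro bm1_prob_increment_scaled) (auto simp: brownian_motion_def)
  moreover have "measure M (increment_event M B \<tau> C S)
      = (\<Prod>k\<in>UNIV. \<Prod>m\<in>S. measure M {\<omega>\<in>space M. B (\<tau> (Suc m)) \<omega> $ k - B (\<tau> m) \<omega> $ k \<in> C m})"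
    using assms by (intro prob_increment_event) auto
  ultimately show ?thesis
    by simp
qed

lemma indep_increment_events:
  assumes bm: "brownian_motion M B" and \<tau>_nonneg: "\<And>m. 0 \<le> \<tau> m" and \<tau>_mono: "\<And>m. \<tau> m < \<tau> (Suc m)"
    and C: "\<And>m. C m \<in> sets borel"
    and S: "\<And>i. i \<in> I \<Longrightarrow> finite (S i)" and disj: "disjoint_family_on S I"
  shows "prob_space.indep_events M (\<lambda>i. increment_event M B \<tau> C (S i)) I"
proof -
  interpret prob_space M
    using bm by (simp add: brownian_motion_def)
  let ?p = "\<lambda>k m. measure M {\<omega>\<in>space M. B (\<tau> (Suc m)) \<omega> $ k - B (\<tau> m) \<omega> $ k \<in> C m}"
  show ?thesis
  proof (rule indep_eventsI)
    show "increment_event M B \<tau> C (S i) \<in> events" if "i \<in> I" for i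
      using increment_event_in_sets[OF bm \<tau>_nonneg S[OF that] C] .
  next
    fix J assume J: "J \<subseteq> I" "finite J" "J \<noteq> {}"
    have fin_S: "finite (\<Union>i\<in>J. S i)"
      using J S by auto
    have "(\<Inter>i\<in>J. increment_event M B \<tau> C (S i)) = increment_event M B \<tau> C (\<Union>i\<in>J. S i)"
      using J by (auto simp: increment_event_def)
    then have "prob (\<Inter>i\<in>J. increment_event M B \<tau> C (S i)) = (\<Prod>k\<in>UNIV. \<Prod>m\<in>(\<Union>i\<in>J. S i). ?p k m)"
      using prob_increment_event[where \<tau> = \<tau>, OF bm \<tau>_nonneg \<tau>_mono fin_S C] by simp
    also have "\<dots> = (\<Prod>k\<in>UNIV. \<Prod>i\<in>J. \<Prod>m\<in>S i. ?p k m)"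
      using J S disjoint_family_on_mono[OF J(1) disj]
      by (intro prod.cong refl prod.UNION_disjoint) (auto simp: disjoint_family_on_def)
    also have "\<dots> = (\<Prod>i\<in>J. \<Prod>k\<in>UNIV. \<Prod>m\<in>S i. ?p k m)"
      by (rule prod.swap)
    also have "\<dots> = (\<Prod>i\<in>J. prob (increment_event M B \<tau> C (S i)))"
      using J S by (intro prod.cong refl prob_increment_event[where \<tau> = \<tau>, OF bm \<tau>_nonneg \<tau>_mono _ C, symmetric]) auto
    finally show "prob (\<Inter>i\<in>J. increment_event M B \<tau> C (S i)) = (\<Prod>i\<in>J. prob (increment_event M B \<tau> C (S i)))" .
  qed
qed

lemma norm_diff_le_SUP_norm_diff:
  fixes w :: "real \<Rightarrow> 'b::real_normed_vector"
  assumes "continuous_on {s..u} w" and "t \<in> {s..u}"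
  shows "norm (w t - w s) \<le> (SUP r\<in>{s..u}. norm (w r - w s))"
proof -
  have "compact ((\<lambda>r. norm (w r - w s)) ` {s..u})"
    using assms(1) by (intro compact_continuous_image continuous_intros) auto
  then have "bdd_above ((\<lambda>r. norm (w r - w s)) ` {s..u})"
    by (intro bounded_imp_bdd_above compact_imp_bounded)
  then show ?thesis
    using assms(2) by (intro cSUP_upper)
qed

lemma tent_path_bounds:
  fixes w :: "real \<Rightarrow> real ^ 'n" and h \<delta> :: real
  assumes cont: "continuous_on {s..u} w" and "s \<le> t" "t \<le> u"
    and rise: "\<And>k. (w t - w s) $ k \<in> {h .. h + \<delta>}"
    and fall: "\<And>k. (w u - w t) $ k \<in> {- h - \<delta> .. - h}"
  shows "norm (w u - w s) \<le> CARD('n) * \<delta>"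
    and "h \<le> (SUP r\<in>{s..u}. norm (w r - w s))"
proof -
  have "\<bar>(w u - w s) $ k\<bar> \<le> \<delta>" for k
    using rise[of k] fall[of k] by (auto simp: abs_le_iff)
  then have "(\<Sum>k\<in>UNIV. \<bar>(w u - w s) $ k\<bar>) \<le> CARD('n) * \<delta>"
    using sum_bounded_above[of UNIV "\<lambda>k. \<bar>(w u - w s) $ k\<bar>" \<delta>] by simp
  then show "norm (w u - w s) \<le> CARD('n) * \<delta>"
    using norm_le_l1_cart[of "w u - w s"] by linarith
next
  obtain k :: 'n where True by blast
  have "h \<le> (w t - w s) $ k"
    using rise[of k] by simp
  also have "\<dots> \<le> norm (w t - w s)"
    using component_le_norm_cart[of "w t - w s" k] by linarith
  also have "\<dots> \<le> (SUP r\<in>{s..u}. norm (w r - w s))"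
    using cont \<open>s \<le> t\<close> \<open>t \<le> u\<close> by (intro norm_diff_le_SUP_norm_diff) auto
  finally show "h \<le> (SUP r\<in>{s..u}. norm (w r - w s))" .
qed

lemma brownian_motion_AE_continuous:
  assumes "brownian_motion M B"
  shows "AE \<omega> in M. continuous_on {0..} (\<lambda>t. B t \<omega>)"
proof -
  interpret prob_space M
    using assms by (simp add: brownian_motion_def)
  have "AE \<omega> in M. \<forall>k\<in>UNIV. continuous_on {0..} (\<lambda>t. B t \<omega> $ k)"
    using assms by (intro AE_finite_allI) (auto simp: brownian_motion_def bm1_def)
  then show ?thesis
  proof eventually_elim
    case (elim \<omega>)
    then have "continuous_on {0..} (\<lambda>t. \<chi> k. B t \<omega> $ k)"
      by (intro continuous_on_vec_lambda) auto
    then show ?case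
      by simp
  qed
qed

text \<open>The two halves of \<open>[i/2^j, (i+1)/2^j]\<close> are the steps \<open>m = 2i\<close> and \<open>m = 2i + 1\<close>
of the grid of mesh \<open>1/2^(j+1)\<close>; \<open>\<sigma>\<close> is the standard deviation of one step.\<close>

definition dyadic_tent_event ::
    "'a measure \<Rightarrow> (real \<Rightarrow> 'a \<Rightarrow> real ^ 'n) \<Rightarrow> real \<Rightarrow> real \<Rightarrow> nat \<Rightarrow> nat \<Rightarrow> 'a set"
  where "dyadic_tent_event M B c \<epsilon> j i =
    (let \<sigma> = sqrt (1 / 2 ^ Suc j) in
      increment_event M B (\<lambda>m. real m / 2 ^ Suc j)
        (\<lambda>m. if even m then {c * \<sigma> .. (c + \<epsilon>) * \<sigma>} else {- (c + \<epsilon>) * \<sigma> .. - c * \<sigma>})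
        {2 * i, 2 * i + 1})"

lemma prob_dyadic_tent_event:
  fixes B :: "real \<Rightarrow> 'a \<Rightarrow> real ^ 'n"
  assumes "brownian_motion M B"
  shows "measure M (dyadic_tent_event M B c \<epsilon> j i)
       = (measure std_normal_distribution {c .. c + \<epsilon>}
          * measure std_normal_distribution {- (c + \<epsilon>) .. - c}) ^ CARD('n)"
proof -
  define lo where "lo m = (if even m then c else - (c + \<epsilon>))" for m :: nat
  define hi where "hi m = (if even m then c + \<epsilon> else - c)" for m :: nat
  have "measure M (dyadic_tent_event M B c \<epsilon> j i)
      = (\<Prod>m\<in>{2 * i, 2 * i + 1}. measure std_normal_distribution {lo m..hi m}) ^ CARD('n)"
    unfolding dyadic_tent_event_def Let_def using assms
    by (intro prob_increment_event_scaled_Icc)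
       (auto simp: divide_strict_right_mono lo_def hi_def diff_divide_distrib[symmetric])
  then show ?thesis
    by (simp add: lo_def hi_def)
qed

lemma indep_dyadic_tent_events:
  assumes "brownian_motion M B"
  shows "prob_space.indep_events M (dyadic_tent_event M B c \<epsilon> j) I"
  unfolding dyadic_tent_event_def Let_def
proof (rule indep_increment_events[OF assms])
  show "disjoint_family_on (\<lambda>i. {2 * i, 2 * i + 1}) I"
    by (auto simp: disjoint_family_on_def)
qed (auto simp: divide_strict_right_mono)

lemma AE_eventually_dyadic_tent_event:
  fixes B :: "real \<Rightarrow> 'a \<Rightarrow> real ^ 'n"
  assumes bm: "brownian_motion M B" and "\<epsilon> > 0"
  shows "AE \<omega> in M. eventually (\<lambda>j. \<exists>i\<in>{1..2 ^ j - 1}. \<omega> \<in> dyadic_tent_event M B c \<epsilon> j i) sequentially"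
proof -
  interpret prob_space M
    using bm by (simp add: brownian_motion_def)
  define q where "q = (measure std_normal_distribution {c .. c + \<epsilon>}
                     * measure std_normal_distribution {- (c + \<epsilon>) .. - c}) ^ CARD('n)"
  have "q > 0"
    unfolding q_def using \<open>\<epsilon> > 0\<close> by (intro zero_less_power mult_pos_pos std_normal_distribution_Icc_pos) auto
  moreover have "j \<le> card {1..2 ^ j - 1::nat}" for j
    using less_exp[of j] unfolding card_atLeastAtMost by linarith
  ultimately show ?thesis
    using indep_dyadic_tent_events[OF bm] prob_dyadic_tent_event[OF bm]
    by (intro AE_eventually_ex_of_indep_events) (auto simp: q_def)
qed

lemma dyadic_tent_path_bounds:
  fixes B :: "real \<Rightarrow> 'a \<Rightarrow> real ^ 'n"
  assumes "\<omega> \<in> dyadic_tent_event M B c \<epsilon> j i" and "continuous_on {0..} (\<lambda>t. B t \<omega>)"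
  defines "\<sigma> \<equiv> sqrt (1 / 2 ^ Suc j)"
  shows "norm (B ((real i + 1) / 2 ^ j) \<omega> - B (real i / 2 ^ j) \<omega>) \<le> real CARD('n) * (\<epsilon> * \<sigma>)"
    and "c * \<sigma> \<le> (SUP t\<in>{real i / 2 ^ j .. (real i + 1) / 2 ^ j}. norm (B t \<omega> - B (real i / 2 ^ j) \<omega>))"
proof -
  define \<tau> where "\<tau> m = real m / 2 ^ Suc j" for m :: nat
  let ?w = "\<lambda>t. B t \<omega>"
  have incr: "\<forall>m\<in>{2 * i, 2 * i + 1}. \<forall>k. B (\<tau> (Suc m)) \<omega> $ k - B (\<tau> m) \<omega> $ k
      \<in> (if even m then {c * \<sigma> .. (c + \<epsilon>) * \<sigma>} else {- (c + \<epsilon>) * \<sigma> .. - c * \<sigma>})"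
    using assms(1) by (simp add: dyadic_tent_event_def increment_event_def Let_def \<tau>_def \<sigma>_def)
  have rise: "(?w (\<tau> (2 * i + 1)) - ?w (\<tau> (2 * i))) $ k \<in> {c * \<sigma> .. c * \<sigma> + \<epsilon> * \<sigma>}" for k
    using incr by (simp add: distrib_right)
  have fall: "(?w (\<tau> (2 * i + 2)) - ?w (\<tau> (2 * i + 1))) $ k \<in> {- (c * \<sigma>) - \<epsilon> * \<sigma> .. - (c * \<sigma>)}" for k
    using incr by (simp add: algebra_simps)
  have "\<tau> (2 * i) \<le> \<tau> (2 * i + 1)" "\<tau> (2 * i + 1) \<le> \<tau> (2 * i + 2)"
    by (simp_all add: \<tau>_def divide_right_mono field_simps)
  moreover have "continuous_on {\<tau> (2 * i) .. \<tau> (2 * i + 2)} ?w"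
    using assms(2) by (rule continuous_on_subset) (auto simp: \<tau>_def)
  moreover have "\<tau> (2 * i) = real i / 2 ^ j" "\<tau> (2 * i + 2) = (real i + 1) / 2 ^ j"
    by (simp_all add: \<tau>_def field_simps)
  ultimately show "norm (?w ((real i + 1) / 2 ^ j) - ?w (real i / 2 ^ j)) \<le> real CARD('n) * (\<epsilon> * \<sigma>)"
    and "c * \<sigma> \<le> (SUP t\<in>{real i / 2 ^ j .. (real i + 1) / 2 ^ j}. norm (?w t - ?w (real i / 2 ^ j)))"
    using tent_path_bounds[of "\<tau> (2 * i)" "\<tau> (2 * i + 2)" ?w "\<tau> (2 * i + 1)", OF _ _ _ rise fall]
    by simp_all
qed

theorem lemma3p1:
  fixes M :: "'a measure" and B :: "real \<Rightarrow> 'a \<Rightarrow> real ^ 'n" and a :: real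
  assumes "brownian_motion M B" and "a > 0"
  shows "AE \<omega> in M. eventually (\<lambda>j::nat. \<exists>i::nat. 1 \<le> i \<and> i \<le> 2 ^ j - 1 \<and>
            norm (B ((real i + 1) / 2 ^ j) \<omega> - B (real i / 2 ^ j) \<omega>) \<le> 2 / sqrt 2 ^ j \<and>
            (SUP t\<in>{real i / 2 ^ j .. (real i + 1) / 2 ^ j}.
                norm (B t \<omega> - B (real i / 2 ^ j) \<omega>)) \<ge> a / sqrt 2 ^ j) sequentially"
proof -
  define c where "c = a * sqrt 2"
  define \<epsilon> where "\<epsilon> = 1 / real CARD('n)"
  have "1 \<le> 2 * sqrt (2::real)"
    by (rule order.trans[of _ "sqrt 2"]) auto
  then have scale: "real CARD('n) * (\<epsilon> * sqrt (1 / 2 ^ Suc j)) \<le> 2 / sqrt 2 ^ j"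
    "c * sqrt (1 / 2 ^ Suc j) = a / sqrt 2 ^ j" for j :: nat
    by (auto simp: \<epsilon>_def c_def real_sqrt_divide real_sqrt_power real_sqrt_mult field_simps)
  have "AE \<omega> in M. eventually (\<lambda>j. \<exists>i\<in>{1..2 ^ j - 1}. \<omega> \<in> dyadic_tent_event M B c \<epsilon> j i) sequentially"
    using assms(1) by (rule AE_eventually_dyadic_tent_event) (simp add: \<epsilon>_def)
  then show ?thesis
    using brownian_motion_AE_continuous[OF assms(1)]
  proof eventually_elim
    case (elim \<omega>)
    have "norm (B ((real i + 1) / 2 ^ j) \<omega> - B (real i / 2 ^ j) \<omega>) \<le> 2 / sqrt 2 ^ j \<and>
        a / sqrt 2 ^ j \<le> (SUP t\<in>{real i / 2 ^ j .. (real i + 1) / 2 ^ j}. norm (B t \<omega> - B (real i / 2 ^ j) \<omega>))"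
      if "\<omega> \<in> dyadic_tent_event M B c \<epsilon> j i" for i j
      using order.trans[OF dyadic_tent_path_bounds(1)[OF that elim(2)] scale(1)]
        dyadic_tent_path_bounds(2)[OF that elim(2)]
      unfolding scale(2) by simp
    with elim(1) show ?case
      by (elim eventually_mono) (meson atLeastAtMost_iff)
  qed
qed

end
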